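(* Let $Y$ be a random variable with values in $[0,1]$ and continuous distribution function $F$. Then the following two properties hold simultaneously: (a) for every $a\in(0,1)$, \[ 2\min\{Y,1-Y\}\,\big|\,\big(2\min\{Y,1-Y\}\le a\big) \;\stackrel{\mathcal D}{=}\; a\cdot 2\min\{Y,1-Y\}, \] and (b) $I(Y\le 1/2)$ and $\max\{Y,1-Y\}$ are independent, if and only if there exist $c\in[0,1]$ and $\delta>0$ such that \[ F(x)=\begin{cases} c\,2^\delta x^\delta, & x\in[0,1/2],\\ 1-(1-c)\,2^\delta(1-x)^\delta, & x\in[1/2,1].\end{cases} \]
   Context: For a random variable $X$ and an event $A$ of positive probability, $X\,|\,A$ denotes the conditional distribution of $X$ given $A$. $I(\cdot)$ denotes the indicator of an event. $\stackrel{\mathcal D}{=}$ denotes equality in distribution. *)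

theory Defs
  imports "HOL-Probability.Probability"
begin

end

theory Submission
  imports Defs
begin

text \<open>
  Write G for the distribution function of Z and H z = P(Y \<le> 1/2, Z \<le> z).
  Both properties reduce to identities between real functions:
  (a) says G(min x a) / G a = G(x / a), hence G(a x) = G a * G x, and a monotone
      solution of this multiplicative Cauchy equation is a power G z = z^\<delta>;
  (b) says H z = F(1/2) * G z, because max(Y, 1 - Y) = 1 - Z/2.
  On [0,1] we have H z = F(z/2) and G z - H z = 1 - F(1 - z/2), so the two
  identities together say exactly that F has the two-sided power form with
  c = F(1/2).
\<close>

section \<open>Monotone solutions of Cauchy's functional equations\<close>

text \<open>An additive function on the nonnegative reals that is antitone is linear;
  first on nonnegative rationals, then everywhere by squeezing.\<close>

lemma additive_rational:
  fixes h :: "real \<Rightarrow> real"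
  assumes add: "\<And>s t. 0 \<le> s \<Longrightarrow> 0 \<le> t \<Longrightarrow> h (s + t) = h s + h t" and "n > 0"
  shows "h (real k / real n) = real k / real n * h 1"
proof -
  have times: "h (real m * s) = real m * h s" if "s \<ge> 0" for m s
  proof (induction m)
    case 0
    show ?case using add[of 0 0] by simp
  next
    case (Suc m)
    have "h (real (Suc m) * s) = h (real m * s + s)" by (simp add: algebra_simps)
    also have "\<dots> = h (real m * s) + h s" using that by (intro add) auto
    finally show ?case using Suc by (simp add: algebra_simps)
  qed
  have "h 1 = h (real n * (1 / real n))" using \<open>n > 0\<close> by simp
  also have "\<dots> = real n * h (1 / real n)" by (rule times) simp
  finally have "h (1 / real n) = h 1 / real n" using \<open>n > 0\<close> by (simp add: field_simps)
  moreover have "h (real k / real n) = real k * h (1 / real n)"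
    using times[of "1 / real n" k] by simp
  ultimately show ?thesis by simp
qed

lemma additive_antitone_linear:
  fixes h :: "real \<Rightarrow> real"
  assumes add: "\<And>s t. 0 \<le> s \<Longrightarrow> 0 \<le> t \<Longrightarrow> h (s + t) = h s + h t"
    and anti: "\<And>s t. 0 \<le> s \<Longrightarrow> s \<le> t \<Longrightarrow> h t \<le> h s"
    and "0 \<le> t"
  shows "h t = t * h 1"
proof (rule ccontr)
  define L where "L = h 1"
  have L0: "L \<le> 0" using anti[of 0 1] add[of 0 0] by (simp add: L_def)
  assume "h t \<noteq> t * h 1"
  then have d: "\<bar>h t - t * L\<bar> > 0" by (simp add: L_def)
  obtain n :: nat where "- L / \<bar>h t - t * L\<bar> < real n" using reals_Archimedean2 by blast
  then obtain m :: nat where m: "- L / \<bar>h t - t * L\<bar> < real m" "m > 0"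
    by (intro that[of "Suc n"]) auto
  text \<open>Squeeze t between consecutive multiples k/m and (k+1)/m.\<close>
  define k where "k = nat \<lfloor>real m * t\<rfloor>"
  have "real k = of_int \<lfloor>real m * t\<rfloor>" using \<open>0 \<le> t\<close> by (simp add: k_def)
  then have k: "real k \<le> real m * t" "real m * t < real k + 1" by linarith+
  have lower: "real k / real m \<le> t" and upper: "t \<le> real (Suc k) / real m"
    using k m(2) by (simp_all add: field_simps)
  have "h t \<le> real k / real m * L"
    using anti[OF _ lower] additive_rational[OF add m(2), of k] by (simp add: L_def)
  moreover have "real (Suc k) / real m * L \<le> h t"
    using anti[OF _ upper] additive_rational[OF add m(2), of "Suc k"] \<open>0 \<le> t\<close> by (simp add: L_def)
  moreover have "t * L \<le> real k / real m * L" using lower L0 by (rule mult_right_mono_neg)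
  moreover have "real (Suc k) / real m * L \<le> t * L" using upper L0 by (rule mult_right_mono_neg)
  moreover have "real (Suc k) / real m * L = real k / real m * L + L / real m"
    using m(2) by (simp add: field_simps)
  ultimately have "\<bar>h t - t * L\<bar> \<le> - L / real m" by linarith
  then have "\<bar>h t - t * L\<bar> * real m \<le> - L" using m(2) by (simp add: field_simps)
  moreover have "- L < \<bar>h t - t * L\<bar> * real m" using m(1) d by (simp add: field_simps)
  ultimately show False by linarith
qed

text \<open>A monotone, positive multiplicative function on (0,1] with G 1 = 1 that is
  not identically 1 is a power x^\<delta> with \<delta> > 0; the proof takes logarithms along
  x = exp(-t).\<close>

lemma multiplicative_monotone_power:
  fixes G :: "real \<Rightarrow> real"
  assumes mono: "\<And>x y. 0 < x \<Longrightarrow> x \<le> y \<Longrightarrow> y \<le> 1 \<Longrightarrow> G x \<le> G y"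
    and pos: "\<And>x. 0 < x \<Longrightarrow> x \<le> 1 \<Longrightarrow> G x > 0"
    and G1: "G 1 = 1"
    and mult: "\<And>a x. 0 < a \<Longrightarrow> a < 1 \<Longrightarrow> 0 < x \<Longrightarrow> x \<le> 1 \<Longrightarrow> G (a * x) = G a * G x"
    and nontrivial: "0 < x0" "x0 \<le> 1" "G x0 < 1"
  shows "\<exists>\<delta>>0. \<forall>x\<in>{0<..1}. G x = x powr \<delta>"
proof -
  define h where "h t = ln (G (exp (- t)))" for t
  have add: "h (s + t) = h s + h t" if "0 \<le> s" "0 \<le> t" for s t
  proof (cases "s = 0")
    case True
    then show ?thesis by (simp add: h_def G1)
  next
    case False
    have "G (exp (- s) * exp (- t)) = G (exp (- s)) * G (exp (- t))"
      using False that by (intro mult) auto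
    moreover have "G (exp (- s)) > 0" "G (exp (- t)) > 0" using that by (intro pos; simp)+
    ultimately show ?thesis by (simp add: h_def ln_mult exp_add[symmetric])
  qed
  have anti: "h t \<le> h s" if "0 \<le> s" "s \<le> t" for s t
    unfolding h_def using that by (subst ln_le_cancel_iff) (auto intro!: pos mono)
  define \<delta> where "\<delta> = - h 1"
  have power: "G x = x powr \<delta>" if "0 < x" "x \<le> 1" for x
  proof -
    have "ln (G x) = h (- ln x)" using that by (simp add: h_def)
    also have "\<dots> = - ln x * h 1" using that by (intro additive_antitone_linear[OF add anti]) auto
    finally have "G x = exp (ln x * \<delta>)" using pos[OF that] by (metis \<delta>_def exp_ln mult_minus_left mult_minus_right)
    then show ?thesis using that by (simp add: powr_def mult.commute)
  qed
  have "\<delta> \<ge> 0" using anti[of 0 1] add[of 0 0] by (simp add: \<delta>_def)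
  moreover have "\<delta> \<noteq> 0" using power[of x0] nontrivial by auto
  ultimately show ?thesis using power by (intro exI[of _ \<delta>]) auto
qed

lemma power_cdf_scaling:
  fixes G :: "real \<Rightarrow> real"
  assumes "\<delta> > 0" "0 < a" "a < 1"
    and G_neg: "\<And>z. z < 0 \<Longrightarrow> G z = 0"
    and G_pow: "\<And>z. 0 \<le> z \<Longrightarrow> z \<le> 1 \<Longrightarrow> G z = z powr \<delta>"
    and G_top: "\<And>z. 1 \<le> z \<Longrightarrow> G z = 1"
  shows "G (min x a) / G a = G (x / a)"
proof -
  have Ga: "G a = a powr \<delta>" "a powr \<delta> > 0" using assms by auto
  consider "x < 0" | "0 \<le> x" "x \<le> a" | "a < x" by linarith
  then show ?thesis
  proof cases
    case 1
    then show ?thesis using assms by (simp add: divide_neg_pos)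
  next
    case 2
    then show ?thesis using assms Ga by (simp add: G_pow powr_divide)
  next
    case 3
    then show ?thesis using assms Ga by (simp add: G_top)
  qed
qed

lemma two_sided_power_form_iff:
  fixes F :: "real \<Rightarrow> real" and c \<delta> :: real
  shows "(\<forall>x. (x \<in> {0..1/2} \<longrightarrow> F x = c * 2 powr \<delta> * x powr \<delta>) \<and>
              (x \<in> {1/2..1} \<longrightarrow> F x = 1 - (1 - c) * 2 powr \<delta> * (1 - x) powr \<delta>))
     \<longleftrightarrow> (\<forall>z\<in>{0..1}. F (z / 2) = c * z powr \<delta> \<and> F (1 - z / 2) = 1 - (1 - c) * z powr \<delta>)"
    (is "?halves \<longleftrightarrow> ?folded")
proof
  have halve: "2 powr \<delta> * (z / 2) powr \<delta> = z powr \<delta>" if "0 \<le> z" for z :: real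
    using that by (simp flip: powr_mult)
  assume ?halves
  show ?folded
  proof
    fix z :: real assume z: "z \<in> {0..1}"
    have "F (z / 2) = c * (2 powr \<delta> * (z / 2) powr \<delta>)"
      using \<open>?halves\<close> z by (simp add: mult.assoc)
    moreover have "F (1 - z / 2) = 1 - (1 - c) * (2 powr \<delta> * (z / 2) powr \<delta>)"
      using \<open>?halves\<close> z by (simp add: mult.assoc)
    ultimately show "F (z / 2) = c * z powr \<delta> \<and> F (1 - z / 2) = 1 - (1 - c) * z powr \<delta>"
      using z by (simp add: halve)
  qed
next
  have double: "(2 * x) powr \<delta> = 2 powr \<delta> * x powr \<delta>" if "0 \<le> x" for x :: real
    using that by (simp add: powr_mult)
  assume ?folded
  show ?halves
  proof (intro allI conjI impI)
    fix x :: real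
    assume x: "x \<in> {0..1/2}"
    then have "F (2 * x / 2) = c * (2 * x) powr \<delta>" using bspec[OF \<open>?folded\<close>, of "2 * x"] by auto
    then show "F x = c * 2 powr \<delta> * x powr \<delta>" using x by (simp add: double)
  next
    fix x :: real
    assume x: "x \<in> {1/2..1}"
    then have "F (1 - 2 * (1 - x) / 2) = 1 - (1 - c) * (2 * (1 - x)) powr \<delta>"
      using bspec[OF \<open>?folded\<close>, of "2 * (1 - x)"] by auto
    moreover have "1 - 2 * (1 - x) / 2 = x" by (simp add: field_simps)
    moreover have "(2 * (1 - x)) powr \<delta> = 2 powr \<delta> * (1 - x) powr \<delta>" using x by (intro double) auto
    ultimately show "F x = 1 - (1 - c) * 2 powr \<delta> * (1 - x) powr \<delta>" by (simp only: mult.assoc)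
  qed
qed

section \<open>Distribution functions and independence of an indicator\<close>

lemma (in prob_space) cdf_distr:
  assumes "X \<in> borel_measurable M"
  shows "cdf (distr M borel X) x = prob {\<omega>\<in>space M. X \<omega> \<le> x}"
proof -
  have "X -` {..x} \<inter> space M = {\<omega>\<in>space M. X \<omega> \<le> x}" by auto
  then show ?thesis using assms by (simp add: cdf_def measure_distr)
qed

lemma (in prob_space) cdf_distr_uniform_measure:
  assumes "X \<in> borel_measurable M" "S \<in> events" "prob S \<noteq> 0"
  shows "cdf (distr (uniform_measure M S) borel X) x
           = prob (S \<inter> {\<omega>\<in>space M. X \<omega> \<le> x}) / prob S"
proof -
  have "X -` {..x} \<inter> space M = {\<omega>\<in>space M. X \<omega> \<le> x}" by auto
  moreover have "emeasure M S \<noteq> 0" using assms(3) by (simp add: emeasure_eq_measure)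
  ultimately show ?thesis using assms
    by (simp add: cdf_def measure_distr measure_uniform_measure emeasure_eq_measure)
qed

lemma vimages_subset_sigma_sets:
  fixes f :: "'a \<Rightarrow> real"
  assumes "A \<subseteq> Pow \<Omega>" "\<And>a. {w\<in>\<Omega>. f w \<le> a} \<in> sigma_sets \<Omega> A"
  shows "{f -` B \<inter> \<Omega> | B. B \<in> sets borel} \<subseteq> sigma_sets \<Omega> A"
proof -
  have "f \<in> borel_measurable (sigma \<Omega> A)"
    unfolding borel_measurable_iff_le using assms by (simp add: sets_measure_of space_measure_of_conv)
  then show ?thesis using measurable_sets[of f "sigma \<Omega> A" borel] assms(1)
    by (auto simp: sets_measure_of space_measure_of_conv)
qed

lemma sigma_sets_indicator_vimages:
  "sigma_sets \<Omega> {(\<lambda>\<omega>. indicator B (X \<omega>) :: real) -` A \<inter> \<Omega> | A. A \<in> sets borel}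
     \<subseteq> sigma_sets \<Omega> {{\<omega>\<in>\<Omega>. X \<omega> \<in> B}}"
proof (rule sigma_sets_mono, rule vimages_subset_sigma_sets)
  define E where "E = {\<omega>\<in>\<Omega>. X \<omega> \<in> B}"
  show "{E} \<subseteq> Pow \<Omega>" by (auto simp: E_def)
  fix a :: real
  consider "a < 0" | "0 \<le> a" "a < 1" | "1 \<le> a" by linarith
  then show "{\<omega>\<in>\<Omega>. indicator B (X \<omega>) \<le> a} \<in> sigma_sets \<Omega> {E}"
  proof cases
    case 1
    then have "{\<omega>\<in>\<Omega>. indicator B (X \<omega>) \<le> a} = {}" by (auto simp: indicator_def)
    then show ?thesis by (metis sigma_sets.Empty)
  next
    case 2
    then have "{\<omega>\<in>\<Omega>. indicator B (X \<omega>) \<le> a} = \<Omega> - E" by (auto simp: indicator_def E_def)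
    then show ?thesis by (simp add: sigma_sets.Basic sigma_sets.Compl)
  next
    case 3
    then have "{\<omega>\<in>\<Omega>. indicator B (X \<omega>) \<le> a} = \<Omega> - {}" by (auto simp: indicator_def)
    then show ?thesis by (metis sigma_sets.Compl sigma_sets.Empty)
  qed
qed

lemma Int_stable_sublevel_sets:
  fixes Z :: "'a \<Rightarrow> 'b::linorder"
  shows "Int_stable (range (\<lambda>z. {\<omega>\<in>\<Omega>. Z \<omega> \<le> z}))"
proof (rule Int_stableI)
  fix A B assume "A \<in> range (\<lambda>z. {\<omega>\<in>\<Omega>. Z \<omega> \<le> z})" "B \<in> range (\<lambda>z. {\<omega>\<in>\<Omega>. Z \<omega> \<le> z})"
  then obtain a b where "A = {\<omega>\<in>\<Omega>. Z \<omega> \<le> a}" "B = {\<omega>\<in>\<Omega>. Z \<omega> \<le> b}" by auto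
  then have "A \<inter> B = {\<omega>\<in>\<Omega>. Z \<omega> \<le> min a b}" by auto
  then show "A \<inter> B \<in> range (\<lambda>z. {\<omega>\<in>\<Omega>. Z \<omega> \<le> z})" by (rule ssubst) (rule rangeI)
qed

text \<open>For the converse direction,
  independence of the generating families (the event, resp. the sublevel sets)
  extends to the generated \<sigma>-algebras.\<close>

lemma (in prob_space) indep_var_indicator_iff:
  fixes Z :: "'a \<Rightarrow> real"
  assumes [measurable]: "X \<in> measurable M N" "B \<in> sets N" "Z \<in> borel_measurable M"
  shows "indep_var borel (\<lambda>\<omega>. indicator B (X \<omega>) :: real) borel Z \<longleftrightarrow>
    (\<forall>z. prob {\<omega>\<in>space M. X \<omega> \<in> B \<and> Z \<omega> \<le> z}
           = prob {\<omega>\<in>space M. X \<omega> \<in> B} * prob {\<omega>\<in>space M. Z \<omega> \<le> z})"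
    (is "?indep \<longleftrightarrow> (\<forall>z. ?product z)")
proof -
  define E where "E = {\<omega>\<in>space M. X \<omega> \<in> B}"
  define GZ where "GZ = range (\<lambda>z. {\<omega>\<in>space M. Z \<omega> \<le> z})"
  have E_event: "E \<in> events" unfolding E_def by measurable
  have E_Int: "E \<inter> {\<omega>\<in>space M. Z \<omega> \<le> z} = {\<omega>\<in>space M. X \<omega> \<in> B \<and> Z \<omega> \<le> z}" for z
    by (auto simp: E_def)
  show ?thesis
  proof
    assume indep: ?indep
    show "\<forall>z. ?product z"
    proof
      fix z
      have "prob ((\<lambda>\<omega>. (indicator B (X \<omega>) :: real, Z \<omega>)) -` ({1} \<times> {..z}) \<inter> space M) =
          prob ((\<lambda>\<omega>. indicator B (X \<omega>) :: real) -` {1} \<inter> space M) * prob (Z -` {..z} \<inter> space M)"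
        by (rule indep_varD[OF indep]) auto
      moreover have "(\<lambda>\<omega>. (indicator B (X \<omega>) :: real, Z \<omega>)) -` ({1} \<times> {..z}) \<inter> space M
          = {\<omega>\<in>space M. X \<omega> \<in> B \<and> Z \<omega> \<le> z}"
        by (auto simp: indicator_def)
      moreover have "(\<lambda>\<omega>. indicator B (X \<omega>) :: real) -` {1} \<inter> space M = E"
        by (auto simp: E_def indicator_def)
      moreover have "Z -` {..z} \<inter> space M = {\<omega>\<in>space M. Z \<omega> \<le> z}" by auto
      ultimately show "?product z" by (simp add: E_def)
    qed
  next
    assume product: "\<forall>z. ?product z"
    then have "indep_set {E} GZ"
      unfolding indep_sets2_eq using E_event by (auto simp: GZ_def E_Int) (simp add: E_def)
    then have generated: "indep_set (sigma_sets (space M) {E}) (sigma_sets (space M) GZ)"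
      by (rule indep_set_sigma_sets[OF _ _ Int_stable_sublevel_sets[of "space M" Z, folded GZ_def]])
         (simp add: Int_stable_def)
    have "sigma_sets (space M) {Z -` A \<inter> space M | A. A \<in> sets borel} \<subseteq> sigma_sets (space M) GZ"
      by (rule sigma_sets_mono, rule vimages_subset_sigma_sets) (auto simp: GZ_def)
    then have "indep_set
        (sigma_sets (space M) {(\<lambda>\<omega>. indicator B (X \<omega>) :: real) -` A \<inter> space M | A. A \<in> sets borel})
        (sigma_sets (space M) {Z -` A \<inter> space M | A. A \<in> sets borel})"
      using sigma_sets_indicator_vimages[of "space M" B X] unfolding indep_set_def
      by (intro indep_sets_mono_sets[OF generated[unfolded indep_set_def]])
         (auto simp: E_def split: bool.split)
    then show ?indep by (simp add: indep_var_eq)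
  qed
qed

lemma (in prob_space) indep_var_transform_right:
  assumes "indep_var S X borel U" "f \<in> borel_measurable borel"
  shows "indep_var S X borel (\<lambda>\<omega>. f (U \<omega>))"
  using indep_var_compose[OF assms(1) measurable_ident assms(2)] by (simp add: comp_def)

section \<open>The folded variable of a continuous distribution on [0,1]\<close>

locale continuous_unit_variable = prob_space M for M :: "'a measure" +
  fixes Y :: "'a \<Rightarrow> real"
  assumes Y_measurable [measurable]: "Y \<in> borel_measurable M"
    and Y_range: "\<And>\<omega>. \<omega> \<in> space M \<Longrightarrow> Y \<omega> \<in> {0..1}"
    and cdf_continuous: "continuous_on UNIV (cdf (distr M borel Y))"
begin

definition F :: "real \<Rightarrow> real" where "F = cdf (distr M borel Y)"
definition Z :: "'a \<Rightarrow> real" where "Z \<omega> = 2 * min (Y \<omega>) (1 - Y \<omega>)"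
definition G :: "real \<Rightarrow> real" where "G z = prob {\<omega>\<in>space M. Z \<omega> \<le> z}"
definition H :: "real \<Rightarrow> real" where "H z = prob {\<omega>\<in>space M. Y \<omega> \<le> 1/2 \<and> Z \<omega> \<le> z}"

lemma Z_measurable [measurable]: "Z \<in> borel_measurable M"
  unfolding Z_def by measurable

lemma prob_Y_le: "prob {\<omega>\<in>space M. Y \<omega> \<le> x} = F x"
  by (simp add: F_def cdf_distr)

text \<open>By continuity of F, Y has no atoms; hence also P(Y \<ge> x) = 1 - F x.\<close>

lemma prob_Y_eq: "prob {\<omega>\<in>space M. Y \<omega> = x} = 0"
proof -
  have "isCont (cdf (distr M borel Y)) x"
    using cdf_continuous by (simp add: continuous_on_eq_continuous_at)
  then have "measure (distr M borel Y) {x} = 0"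
    by (simp add: real_distribution.finite_borel_measure_M finite_borel_measure.isCont_cdf)
  moreover have "Y -` {x} \<inter> space M = {\<omega>\<in>space M. Y \<omega> = x}" by auto
  ultimately show ?thesis by (simp add: measure_distr)
qed

lemma prob_Y_ge: "prob {\<omega>\<in>space M. x \<le> Y \<omega>} = 1 - F x"
proof -
  have "{\<omega>\<in>space M. Y \<omega> \<le> x} = {\<omega>\<in>space M. Y \<omega> < x} \<union> {\<omega>\<in>space M. Y \<omega> = x}" by auto
  then have "F x = prob {\<omega>\<in>space M. Y \<omega> < x}"
    using prob_Y_le[of x] prob_Y_eq[of x] by (simp add: finite_measure_Union disjoint_iff)
  moreover have "{\<omega>\<in>space M. x \<le> Y \<omega>} = space M - {\<omega>\<in>space M. Y \<omega> < x}" by auto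
  ultimately show ?thesis by (simp add: prob_compl)
qed

lemma F_0: "F 0 = 0"
proof -
  have "{\<omega>\<in>space M. Y \<omega> \<le> 0} = {\<omega>\<in>space M. Y \<omega> = 0}" using Y_range by force
  then show ?thesis using prob_Y_le prob_Y_eq by metis
qed

lemma F_1: "F 1 = 1"
proof -
  have "{\<omega>\<in>space M. Y \<omega> \<le> 1} = space M" using Y_range by force
  then show ?thesis using prob_Y_le prob_space by metis
qed

lemma Z_nonneg: "\<omega> \<in> space M \<Longrightarrow> 0 \<le> Z \<omega>"
  using Y_range[of \<omega>] by (auto simp: Z_def)

lemma Z_le_1: "\<omega> \<in> space M \<Longrightarrow> Z \<omega> \<le> 1"
  using Y_range[of \<omega>] by (auto simp: Z_def min_def)

lemma G_mono: "x \<le> y \<Longrightarrow> G x \<le> G y"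
  unfolding G_def by (intro finite_measure_mono) auto

lemma G_neg: "z < 0 \<Longrightarrow> G z = 0"
proof -
  assume "z < 0"
  then have "{\<omega>\<in>space M. Z \<omega> \<le> z} = {}" by (auto dest: Z_nonneg)
  then show ?thesis by (simp only: G_def measure_empty)
qed

lemma G_top: "1 \<le> z \<Longrightarrow> G z = 1"
proof -
  assume "1 \<le> z"
  then have "{\<omega>\<in>space M. Z \<omega> \<le> z} = space M" by (auto intro: order_trans[OF Z_le_1])
  then show ?thesis by (simp add: G_def prob_space)
qed

text \<open>On the event Y \<le> 1/2 the folded variable is 2Y, so H is F rescaled; off it,
  Z \<le> z means Y \<ge> 1 - z/2.\<close>

lemma H_neg: "z < 0 \<Longrightarrow> H z = 0"
proof -
  assume "z < 0"
  then have "{\<omega>\<in>space M. Y \<omega> \<le> 1/2 \<and> Z \<omega> \<le> z} = {}" by (auto dest: Z_nonneg)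
  then show ?thesis by (simp only: H_def measure_empty)
qed

lemma H_eq: "0 \<le> z \<Longrightarrow> H z = F (min z 1 / 2)"
proof -
  assume "0 \<le> z"
  have "{\<omega>\<in>space M. Y \<omega> \<le> 1/2 \<and> Z \<omega> \<le> z} = {\<omega>\<in>space M. Y \<omega> \<le> min z 1 / 2}"
    by (auto simp: Z_def min_def)
  then show ?thesis by (simp only: H_def prob_Y_le)
qed

lemma G_minus_H: "z < 1 \<Longrightarrow> G z - H z = 1 - F (1 - z / 2)"
proof -
  assume "z < 1"
  then have "prob {\<omega>\<in>space M. 1 - z / 2 \<le> Y \<omega>}
      = prob ({\<omega>\<in>space M. Z \<omega> \<le> z} - {\<omega>\<in>space M. Y \<omega> \<le> 1/2 \<and> Z \<omega> \<le> z})"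
    by (intro arg_cong[where f=prob]) (auto simp: Z_def min_def)
  also have "\<dots> = G z - H z"
    unfolding G_def H_def by (rule finite_measure_Diff) auto
  finally show ?thesis by (simp add: prob_Y_ge)
qed

lemma G_eq:
  assumes "0 \<le> z" "z < 1"
  shows "G z = F (z / 2) + 1 - F (1 - z / 2)"
proof -
  have "H z = F (z / 2)" using H_eq[OF assms(1)] assms(2) by (simp add: min_absorb1)
  then show ?thesis using G_minus_H[OF assms(2)] by linarith
qed

text \<open>Since Y has no atom at 0 or 1, G is not identically 1 near 0.\<close>

lemma G_below_one: "\<exists>x0\<in>{0<..<1}. G x0 < 1"
proof -
  define g where "g z = F (z / 2) + 1 - F (1 - z / 2)" for z
  have F_cont: "isCont F x" for x
    using cdf_continuous by (simp add: F_def continuous_on_eq_continuous_at)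
  have "isCont (\<lambda>z. F (z / 2)) 0" "isCont (\<lambda>z. F (1 - z / 2)) 0"
    by (rule isCont_o2[OF _ F_cont]; intro continuous_intros; simp)+
  then have "isCont g 0" unfolding g_def by (intro continuous_intros)
  moreover have "g 0 = 0" by (simp add: g_def F_0 F_1)
  ultimately have "(g \<longlongrightarrow> 0) (at_right 0)"
    unfolding isCont_def filterlim_at_split by simp
  then have "\<forall>\<^sub>F z in at_right 0. g z < 1" by (rule order_tendstoD) simp
  moreover have "\<forall>\<^sub>F z in at_right 0. z \<in> {0<..<(1::real)}" by (rule eventually_at_right_real) simp
  ultimately have "\<forall>\<^sub>F z in at_right 0. g z < 1 \<and> z \<in> {0<..<(1::real)}" by (rule eventually_conj)
  then obtain x0 where "g x0 < 1" "x0 \<in> {0<..<1}"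
    using eventually_happens[of _ "at_right (0::real)"] by auto
  then show ?thesis using G_eq[of x0] by (intro bexI[of _ x0]) (auto simp: g_def)
qed

lemma scaling_iff:
  assumes "0 < a" "G a > 0"
  shows "distr (uniform_measure M {\<omega>\<in>space M. Z \<omega> \<le> a}) borel Z = distr M borel (\<lambda>\<omega>. a * Z \<omega>)
     \<longleftrightarrow> (\<forall>x. G (min x a) / G a = G (x / a))"
proof -
  define S where "S = {\<omega>\<in>space M. Z \<omega> \<le> a}"
  have S: "S \<in> events" "prob S \<noteq> 0" using assms(2) by (auto simp: S_def G_def)
  have conditioned: "cdf (distr (uniform_measure M S) borel Z) x = G (min x a) / G a" for x
  proof -
    have "S \<inter> {\<omega>\<in>space M. Z \<omega> \<le> x} = {\<omega>\<in>space M. Z \<omega> \<le> min x a}" by (auto simp: S_def)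
    then show ?thesis using S by (simp add: cdf_distr_uniform_measure G_def S_def)
  qed
  have scaled: "cdf (distr M borel (\<lambda>\<omega>. a * Z \<omega>)) x = G (x / a)" for x
  proof -
    have "{\<omega>\<in>space M. a * Z \<omega> \<le> x} = {\<omega>\<in>space M. Z \<omega> \<le> x / a}"
      using assms(1) by (auto simp: field_simps)
    then show ?thesis by (simp add: cdf_distr G_def)
  qed
  have "prob_space (uniform_measure M S)"
    using S by (intro prob_space_uniform_measure) (auto simp: emeasure_eq_measure)
  then have "real_distribution (distr (uniform_measure M S) borel Z)"
    by (rule prob_space.real_distribution_distr) simp
  moreover have "real_distribution (distr M borel (\<lambda>\<omega>. a * Z \<omega>))" by simp
  ultimately have "distr (uniform_measure M S) borel Z = distr M borel (\<lambda>\<omega>. a * Z \<omega>)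
      \<longleftrightarrow> cdf (distr (uniform_measure M S) borel Z) = cdf (distr M borel (\<lambda>\<omega>. a * Z \<omega>))"
    using cdf_unique by metis
  then show ?thesis by (simp add: S_def[symmetric] fun_eq_iff conditioned scaled)
qed

text \<open>Property (b) in terms of G and H: max(Y, 1 - Y) = 1 - Z/2 carries the same
  information as Z, and independence of an indicator reduces to sublevel sets.\<close>

lemma independence_iff:
  "indep_var borel (\<lambda>\<omega>. indicator {..1/2::real} (Y \<omega>) :: real) borel (\<lambda>\<omega>. max (Y \<omega>) (1 - Y \<omega>))
     \<longleftrightarrow> (\<forall>z. H z = F (1/2) * G z)"
  (is "indep_var borel ?I borel ?max \<longleftrightarrow> _")
proof -
  have max_Z: "max (Y \<omega>) (1 - Y \<omega>) = 1 - Z \<omega> / 2" "Z \<omega> = 2 - 2 * max (Y \<omega>) (1 - Y \<omega>)" for \<omega>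
    by (auto simp: Z_def max_def min_def)
  have "indep_var borel ?I borel ?max \<longleftrightarrow> indep_var borel ?I borel Z"
  proof
    assume "indep_var borel ?I borel ?max"
    then have "indep_var borel ?I borel (\<lambda>\<omega>. 2 - 2 * ?max \<omega>)"
      by (rule indep_var_transform_right) simp
    then show "indep_var borel ?I borel Z" by (simp only: max_Z(2)[symmetric])
  next
    assume "indep_var borel ?I borel Z"
    then have "indep_var borel ?I borel (\<lambda>\<omega>. 1 - Z \<omega> / 2)"
      by (rule indep_var_transform_right) simp
    then show "indep_var borel ?I borel ?max" by (simp only: max_Z(1)[symmetric])
  qed
  also have "\<dots> \<longleftrightarrow> (\<forall>z. prob {\<omega>\<in>space M. Y \<omega> \<in> {..1/2} \<and> Z \<omega> \<le> z}
        = prob {\<omega>\<in>space M. Y \<omega> \<in> {..1/2}} * prob {\<omega>\<in>space M. Z \<omega> \<le> z})"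
    by (rule indep_var_indicator_iff[where N=borel]) auto
  also have "\<dots> \<longleftrightarrow> (\<forall>z. H z = F (1/2) * G z)"
    by (simp add: H_def G_def prob_Y_le[symmetric])
  finally show ?thesis .
qed

text \<open>Under the scaling property G solves the multiplicative Cauchy equation on (0,1],
  so G is a power z^\<delta> on [0,1].\<close>

lemma G_power_of_scaling:
  assumes scaling: "\<forall>a\<in>{0<..<1}. G a > 0 \<and> (\<forall>x. G (min x a) / G a = G (x / a))"
  shows "\<exists>\<delta>>0. \<forall>z\<in>{0..1}. G z = z powr \<delta>"
proof -
  have multiplicative: "G (a * x) = G a * G x" if "0 < a" "a < 1" "0 < x" "x \<le> 1" for a x
  proof -
    have "G a > 0" and "\<forall>y. G (min y a) / G a = G (y / a)" using scaling that by auto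
    then have "G (min (a * x) a) / G a = G (a * x / a)" by blast
    moreover have "min (a * x) a = a * x" using that by (simp add: mult_left_le)
    moreover have "a * x / a = x" using that by simp
    ultimately have "G (a * x) / G a = G x" by simp
    then show ?thesis using \<open>G a > 0\<close> by (simp add: divide_eq_eq mult.commute)
  qed
  have positive: "G x > 0" if "0 < x" "x \<le> 1" for x
  proof (cases "x = 1")
    case True
    then show ?thesis using G_top by simp
  next
    case False
    then show ?thesis using scaling that by simp
  qed
  obtain x0 where x0: "x0 \<in> {0<..<1}" "G x0 < 1" using G_below_one by blast
  have "\<exists>\<delta>>0. \<forall>x\<in>{0<..1}. G x = x powr \<delta>"
    by (rule multiplicative_monotone_power[of G x0])
       (use G_mono positive G_top multiplicative x0 in auto)
  then obtain \<delta> where "\<delta> > 0" and power: "\<forall>x\<in>{0<..1}. G x = x powr \<delta>" by blast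
  have "G 0 = 0" using G_eq[of 0] by (simp add: F_0 F_1)
  then have "\<forall>z\<in>{0..1}. G z = z powr \<delta>" using power by (auto simp: le_less)
  then show ?thesis using \<open>\<delta> > 0\<close> by blast
qed

text \<open>Forward direction: with G = z^\<delta>, the product rule for H transfers the power
  law to both halves of F, with c = F(1/2).\<close>

lemma power_law_of_scaling_and_independence:
  assumes scaling: "\<forall>a\<in>{0<..<1}. G a > 0 \<and> (\<forall>x. G (min x a) / G a = G (x / a))"
    and product: "\<forall>z. H z = F (1/2) * G z"
  shows "\<exists>c\<in>{0..1}. \<exists>\<delta>>0. \<forall>z\<in>{0..1}.
           F (z / 2) = c * z powr \<delta> \<and> F (1 - z / 2) = 1 - (1 - c) * z powr \<delta>"
proof -
  obtain \<delta> where "\<delta> > 0" and G_power: "\<And>z. 0 \<le> z \<Longrightarrow> z \<le> 1 \<Longrightarrow> G z = z powr \<delta>"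
    using G_power_of_scaling[OF scaling] by auto
  define c where "c = F (1/2)"
  have "c = prob {\<omega>\<in>space M. Y \<omega> \<le> 1/2}" by (simp only: c_def prob_Y_le)
  then have "c \<in> {0..1}" by simp
  moreover have "\<forall>z\<in>{0..1}. F (z / 2) = c * z powr \<delta> \<and> F (1 - z / 2) = 1 - (1 - c) * z powr \<delta>"
  proof
    fix z :: real assume "z \<in> {0..1}"
    then have z: "0 \<le> z" "z \<le> 1" by auto
    have "F (z / 2) = H z" using H_eq z by (simp add: min_absorb1)
    then have left: "F (z / 2) = c * z powr \<delta>" using product G_power z by (simp add: c_def)
    have right: "F (1 - z / 2) = 1 - (1 - c) * z powr \<delta>"
    proof (cases "z = 1")
      case True
      then show ?thesis by (simp add: c_def)
    next
      case False
      then have "1 - F (1 - z / 2) = G z - H z" using G_minus_H z by simp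
      then show ?thesis using product G_power z by (simp add: c_def algebra_simps)
    qed
    show "F (z / 2) = c * z powr \<delta> \<and> F (1 - z / 2) = 1 - (1 - c) * z powr \<delta>"
      using left right ..
  qed
  ultimately show ?thesis using \<open>\<delta> > 0\<close> by (intro bexI[of _ c] exI[of _ \<delta>]) auto
qed

lemma scaling_and_independence_of_power_law:
  assumes "\<delta> > 0"
    and form: "\<forall>z\<in>{0..1}. F (z / 2) = c * z powr \<delta> \<and> F (1 - z / 2) = 1 - (1 - c) * z powr \<delta>"
  shows "(\<forall>a\<in>{0<..<1}. G a > 0 \<and> (\<forall>x. G (min x a) / G a = G (x / a)))
       \<and> (\<forall>z. H z = F (1/2) * G z)"
proof
  have form_at: "F (z / 2) = c * z powr \<delta>" "F (1 - z / 2) = 1 - (1 - c) * z powr \<delta>"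
    if "0 \<le> z" "z \<le> 1" for z
    using bspec[OF form, of z] that by auto
  have G_power: "G z = z powr \<delta>" if "0 \<le> z" "z \<le> 1" for z
  proof (cases "z = 1")
    case True
    then show ?thesis using G_top by simp
  next
    case False
    then show ?thesis using that G_eq[of z] form_at[of z] by (simp add: algebra_simps)
  qed
  show "\<forall>a\<in>{0<..<1}. G a > 0 \<and> (\<forall>x. G (min x a) / G a = G (x / a))"
  proof
    fix a :: real assume a: "a \<in> {0<..<1}"
    show "G a > 0 \<and> (\<forall>x. G (min x a) / G a = G (x / a))"
    proof (intro conjI allI)
      show "G a > 0" using G_power a by simp
      show "G (min x a) / G a = G (x / a)" for x
        using G_power G_neg G_top \<open>\<delta> > 0\<close> a by (intro power_cdf_scaling) auto
    qed
  qed
  have "F (1/2) = c" using form_at(1)[of 1] by simp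
  show "\<forall>z. H z = F (1/2) * G z"
  proof
    fix z :: real
    consider "z < 0" | "0 \<le> z" "z \<le> 1" | "1 < z" by linarith
    then show "H z = F (1/2) * G z"
    proof cases
      case 1
      then show ?thesis by (simp add: H_neg G_neg)
    next
      case 2
      then show ?thesis using H_eq[of z] form_at(1)[of z] G_power[of z] \<open>F (1/2) = c\<close>
        by (simp add: min_absorb1)
    next
      case 3
      then show ?thesis by (simp add: H_eq G_top)
    qed
  qed
qed

theorem characterization:
  "((\<forall>a\<in>{0<..<1::real}.
       prob {\<omega>\<in>space M. 2 * min (Y \<omega>) (1 - Y \<omega>) \<le> a} > 0 \<and>
       distr (uniform_measure M {\<omega>\<in>space M. 2 * min (Y \<omega>) (1 - Y \<omega>) \<le> a})
             borel (\<lambda>\<omega>. 2 * min (Y \<omega>) (1 - Y \<omega>))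
       = distr M borel (\<lambda>\<omega>. a * (2 * min (Y \<omega>) (1 - Y \<omega>))))
    \<and> indep_var borel (\<lambda>\<omega>. indicator {..1/2::real} (Y \<omega>) :: real)
                borel (\<lambda>\<omega>. max (Y \<omega>) (1 - Y \<omega>)))
   \<longleftrightarrow>
   (\<exists>c\<in>{0..1::real}. \<exists>\<delta>>0::real. \<forall>x.
      (x \<in> {0..1/2} \<longrightarrow> cdf (distr M borel Y) x = c * 2 powr \<delta> * x powr \<delta>) \<and>
      (x \<in> {1/2..1} \<longrightarrow> cdf (distr M borel Y) x = 1 - (1 - c) * 2 powr \<delta> * (1 - x) powr \<delta>))"
proof -
  have scaling: "(\<forall>a\<in>{0<..<1::real}. G a > 0 \<and>
       distr (uniform_measure M {\<omega>\<in>space M. Z \<omega> \<le> a}) borel Z = distr M borel (\<lambda>\<omega>. a * Z \<omega>))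
    \<longleftrightarrow> (\<forall>a\<in>{0<..<1}. G a > 0 \<and> (\<forall>x. G (min x a) / G a = G (x / a)))"
    using scaling_iff by (intro ball_cong) auto
  have directions: "(\<exists>c\<in>{0..1}. \<exists>\<delta>>0. \<forall>z\<in>{0..1}.
           F (z / 2) = c * z powr \<delta> \<and> F (1 - z / 2) = 1 - (1 - c) * z powr \<delta>)
    \<longleftrightarrow> (\<forall>a\<in>{0<..<1}. G a > 0 \<and> (\<forall>x. G (min x a) / G a = G (x / a)))
        \<and> (\<forall>z. H z = F (1/2) * G z)"
    using power_law_of_scaling_and_independence scaling_and_independence_of_power_law by blast
  show ?thesis
    unfolding Z_def[symmetric] G_def[symmetric] F_def[symmetric] scaling independence_iff
      two_sided_power_form_iff using directions by blast
qed

end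

theorem lemma2:
  fixes M :: "'a measure" and Y :: "'a \<Rightarrow> real"
  assumes "prob_space M"
    and "Y \<in> borel_measurable M"
    and "\<forall>\<omega>\<in>space M. Y \<omega> \<in> {0..1}"
    and "continuous_on UNIV (cdf (distr M borel Y))"
  shows "((\<forall>a\<in>{0<..<1::real}.
             measure M {\<omega>\<in>space M. 2 * min (Y \<omega>) (1 - Y \<omega>) \<le> a} > 0 \<and>
             distr (uniform_measure M {\<omega>\<in>space M. 2 * min (Y \<omega>) (1 - Y \<omega>) \<le> a})
                   borel (\<lambda>\<omega>. 2 * min (Y \<omega>) (1 - Y \<omega>))
             = distr M borel (\<lambda>\<omega>. a * (2 * min (Y \<omega>) (1 - Y \<omega>))))
         \<and> prob_space.indep_var M borel (\<lambda>\<omega>. indicator {..1/2::real} (Y \<omega>) :: real)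
                                  borel (\<lambda>\<omega>. max (Y \<omega>) (1 - Y \<omega>)))
     \<longleftrightarrow>
     (\<exists>c\<in>{0..1::real}. \<exists>\<delta>>0::real. \<forall>x.
        (x \<in> {0..1/2} \<longrightarrow> cdf (distr M borel Y) x = c * 2 powr \<delta> * x powr \<delta>) \<and>
        (x \<in> {1/2..1} \<longrightarrow> cdf (distr M borel Y) x = 1 - (1 - c) * 2 powr \<delta> * (1 - x) powr \<delta>))"
proof -
  interpret continuous_unit_variable M Y
    using assms by (intro continuous_unit_variable.intro continuous_unit_variable_axioms.intro) auto
  show ?thesis by (rule characterization)
qed

end
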